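(* There is $C>0$ (depending only on $R$) such that for all $\varepsilon\in(0,1]$, $$\langle\hat h_\varepsilon,-\Delta_{S^2}\hat h_\varepsilon\rangle_{L^2(S^2)}\le C\varepsilon .$$
   Context: Setup: fix $R>0$, $\tau=0$. $\hat h_\varepsilon(w)=\tilde h_\varepsilon(\varepsilon w)$, where $\tilde h_\varepsilon=h_\varepsilon-\log|\frac{z-\varepsilon}{z+\varepsilon}|^2$ and $h_\varepsilon=\log|u|^2$ for the gauged $\mathbb{P}^1$ vortex-antivortex pair on the round sphere $S^2_R$ (metric $\frac{4R^2}{(1+|z|^2)^2}dzd\bar z$) with vortex at $z=\varepsilon$, antivortex at $z=-\varepsilon$; $\hat h_\varepsilon$ is a smooth function on $S^2$ satisfying $-\Delta_{S^2}\hat h+2R^2\varepsilon^2f_\varepsilon(w)^2F(w,\hat h)=0$ with $f_\varepsilon(w)=\frac{1+|w|^2}{1+\varepsilon^2|w|^2}$ and $F(w,v)=\frac{|w-1|^2e^v-|w+1|^2}{|w-1|^2e^v+|w+1|^2}$. Here $S^2$ is the unit round sphere in the stereographic coordinate $w$ (area form $\frac{4\,d^2w}{(1+|w|^2)^2}$) and $\Delta_{S^2}=\frac{(1+|w|^2)^2}{4}\nabla^2_w$ is its (negative semidefinite) Laplacian. *)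

theory Defs
  imports "HOL-Analysis.Analysis"
begin

text \<open>Functions on the plane are functions on the complex numbers (the stereographic
coordinate w = x + i y).  Directional (partial) derivative along the direction d.\<close>

definition pd :: "complex \<Rightarrow> (complex \<Rightarrow> real) \<Rightarrow> complex \<Rightarrow> real" where
  "pd d f x = deriv (\<lambda>t::real. f (x + of_real t * d)) 0"

fun Ck_on :: "nat \<Rightarrow> (complex \<Rightarrow> real) \<Rightarrow> complex set \<Rightarrow> bool" where
  "Ck_on 0 f S = continuous_on S f"
| "Ck_on (Suc k) f S = ((\<forall>x\<in>S. f differentiable (at x)) \<and>
      Ck_on k (pd 1 f) S \<and> Ck_on k (pd \<i> f) S)"

definition smooth_on :: "(complex \<Rightarrow> real) \<Rightarrow> complex set \<Rightarrow> bool" where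
  "smooth_on f S \<longleftrightarrow> (\<forall>k. Ck_on k f S)"

text \<open>Smooth function on the unit sphere S^2, given in the stereographic coordinate w:
smooth in the chart w on all of C, and smooth in the chart zeta = 1/w near the
point at infinity (i.e. w \<mapsto> h(1/zeta) extends smoothly across zeta = 0).\<close>

definition smooth_S2 :: "(complex \<Rightarrow> real) \<Rightarrow> bool" where
  "smooth_S2 h \<longleftrightarrow> smooth_on h UNIV \<and>
     (\<exists>g. smooth_on g (ball 0 1) \<and> (\<forall>\<zeta>\<in>ball 0 1 - {0}. g \<zeta> = h (inverse \<zeta>)))"

definition flat_lap :: "(complex \<Rightarrow> real) \<Rightarrow> complex \<Rightarrow> real" where
  "flat_lap h w = pd 1 (pd 1 h) w + pd \<i> (pd \<i> h) w"

definition lap_S2 :: "(complex \<Rightarrow> real) \<Rightarrow> complex \<Rightarrow> real" where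
  "lap_S2 h w = (1 + (cmod w)\<^sup>2)\<^sup>2 / 4 * flat_lap h w"

definition f_eps :: "real \<Rightarrow> complex \<Rightarrow> real" where
  "f_eps \<epsilon> w = (1 + (cmod w)\<^sup>2) / (1 + \<epsilon>\<^sup>2 * (cmod w)\<^sup>2)"

definition F_nl :: "complex \<Rightarrow> real \<Rightarrow> real" where
  "F_nl w v = ((cmod (w - 1))\<^sup>2 * exp v - (cmod (w + 1))\<^sup>2) /
              ((cmod (w - 1))\<^sup>2 * exp v + (cmod (w + 1))\<^sup>2)"

definition hat_h_eq :: "real \<Rightarrow> real \<Rightarrow> (complex \<Rightarrow> real) \<Rightarrow> bool" where
  "hat_h_eq R \<epsilon> h \<longleftrightarrow> (\<forall>w. - lap_S2 h w + 2 * R\<^sup>2 * \<epsilon>\<^sup>2 * (f_eps \<epsilon> w)\<^sup>2 * F_nl w (h w) = 0)"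

text \<open>L^2(S^2) pairing <h, -Delta_{S^2} h>, with area form 4 d^2w / (1+|w|^2)^2.\<close>

definition dirichlet_S2 :: "(complex \<Rightarrow> real) \<Rightarrow> real" where
  "dirichlet_S2 h = (LINT w|lborel. h w * (- lap_S2 h w) * (4 / (1 + (cmod w)\<^sup>2)\<^sup>2))"

end

theory Submission
  imports Defs
begin

text \<open>By the equation, the integrand of the pairing equals 2 R^2 eps^2 f_eps^2 (- h F(w, h))
  times the area density. Since F(w, v) = tanh ((v - L) / 2) with L = 2 ln (|w+1| / |w-1|),
  the product - v F(w, v) is at most L tanh (L / 2) <= 8 (1/|w-1| + 1/|w+1|) for every v, so
  nothing about h beyond the equation is needed.
  What remains is the integral of 4 eps^2 / ((1 + eps^2 |w|^2)^2 |w -+ 1|), which is O(eps)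
  by scaling |w| ~ 1/eps. It is bounded via |w - a| >= |x - a|^(1/2) |y|^(1/2), which turns
  it into a product of two one-dimensional integrals, each O(eps^(-1/2)).\<close>

section \<open>The nonlinearity\<close>

lemma neg_mult_tanh_shift_le:
  fixes v L :: real
  shows "- v * tanh ((v - L) / 2) \<le> L * tanh (L / 2)"
proof -
  have rhs_nonneg: "0 \<le> L * tanh (L / 2)"
    by (cases "L \<ge> 0") (auto intro: mult_nonneg_nonneg mult_nonpos_nonpos)
  \<comment> \<open>the left-hand side is positive only for v strictly between 0 and L\<close>
  consider "0 \<le> v" "v \<le> L" | "L \<le> v" "v \<le> 0" | "0 \<le> v * tanh ((v - L) / 2)"
  proof (cases "0 \<le> v"; cases "v \<le> L")
    assume "0 \<le> v" "\<not> v \<le> L" "0 \<le> v * tanh ((v - L) / 2) \<Longrightarrow> thesis"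
    then show thesis by (simp add: mult_nonneg_nonneg)
  next
    assume "\<not> 0 \<le> v" "v \<le> L" "0 \<le> v * tanh ((v - L) / 2) \<Longrightarrow> thesis"
    then show thesis by (simp add: mult_nonpos_nonpos)
  qed auto
  then show ?thesis
  proof cases
    case 1
    have "- tanh ((v - L) / 2) \<le> tanh (L / 2)"
      using 1 tanh_real_le_iff[of "- (L / 2)" "(v - L) / 2"] by simp
    then have "v * - tanh ((v - L) / 2) \<le> L * tanh (L / 2)"
      using 1 by (intro mult_mono) auto
    then show ?thesis by simp
  next
    case 2
    have "tanh ((v - L) / 2) \<le> - tanh (L / 2)"
      using 2 tanh_real_le_iff[of "(v - L) / 2" "- (L / 2)"] by simp
    then have "(- v) * tanh ((v - L) / 2) \<le> (- L) * - tanh (L / 2)"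
      using 2 by (intro mult_mono) auto
    then show ?thesis by simp
  next
    case 3
    then show ?thesis using rhs_nonneg by linarith
  qed
qed

lemma tanh_ln_div:
  fixes p q :: real
  assumes "0 < p" "0 < q"
  shows "tanh (ln (p / q)) = (p\<^sup>2 - q\<^sup>2) / (p\<^sup>2 + q\<^sup>2)"
proof -
  have "tanh (ln (p / q)) = (p\<^sup>2 / q\<^sup>2 - 1) / (p\<^sup>2 / q\<^sup>2 + 1)"
    using assms by (simp add: tanh_ln_real power_divide)
  also have "\<dots> = (p\<^sup>2 - q\<^sup>2) / (p\<^sup>2 + q\<^sup>2)"
    using assms by (simp add: divide_simps)
  finally show ?thesis .
qed

lemma logistic_eq_tanh:
  fixes p q v :: real
  assumes "0 < p" "0 < q"
  shows "(q\<^sup>2 * exp v - p\<^sup>2) / (q\<^sup>2 * exp v + p\<^sup>2) = tanh ((v - 2 * ln (p / q)) / 2)"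
proof -
  define x where "x = (v - 2 * ln (p / q)) / 2"
  have "- 2 * x = 2 * ln (p / q) - v"
    by (simp add: x_def)
  then have "exp (- 2 * x) = exp (ln (p / q)) ^ 2 / exp v"
    by (simp only: exp_diff exp_double)
  also have "\<dots> = p\<^sup>2 / (q\<^sup>2 * exp v)"
    using assms by (simp add: power_divide)
  finally have "tanh x = (1 - p\<^sup>2 / (q\<^sup>2 * exp v)) / (1 + p\<^sup>2 / (q\<^sup>2 * exp v))"
    by (simp only: tanh_real_altdef)
  also have "\<dots> = (q\<^sup>2 * exp v - p\<^sup>2) / (q\<^sup>2 * exp v + p\<^sup>2)"
    using assms by (simp add: divide_simps)
  finally show ?thesis
    by (simp add: x_def)
qed

lemma ln_div_mult_tanh_ln_div_le_ordered:
  fixes p q :: real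
  assumes q: "0 < q" and qp: "q \<le> p" and dist: "p - q \<le> 2" and sum: "2 \<le> p + q"
  shows "2 * ln (p / q) * tanh (ln (p / q)) \<le> 8 / q"
proof -
  have p: "0 < p" using q qp by linarith
  have sq_pos: "0 < p\<^sup>2 + q\<^sup>2" using p q by (simp add: add_pos_pos)
  have ln_le: "ln (p / q) \<le> (p - q) / q"
    using p q ln_le_minus_one[of "p / q"] by (simp add: diff_divide_distrib)
  \<comment> \<open>tanh (ln (p / q)) = (p - q) (p + q) / (p^2 + q^2), and p + q <= p^2 + q^2 as p + q >= 2\<close>
  have tanh_le: "tanh (ln (p / q)) \<le> p - q"
  proof -
    have "(p + q) * 2 \<le> (p + q) * (p + q)" using sum by (intro mult_left_mono) auto
    also have "\<dots> \<le> 2 * (p\<^sup>2 + q\<^sup>2)" using sum_squares_ge_zero[of "p - q" 0]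
      by (simp add: power2_eq_square algebra_simps)
    finally have "(p - q) * (p + q) \<le> (p - q) * (p\<^sup>2 + q\<^sup>2)"
      using qp by (intro mult_left_mono) auto
    then have "(p\<^sup>2 - q\<^sup>2) / (p\<^sup>2 + q\<^sup>2) \<le> p - q"
      unfolding pos_divide_le_eq[OF sq_pos] by (simp add: power2_eq_square algebra_simps)
    then show ?thesis
      using p q by (simp add: tanh_ln_div)
  qed
  have "2 * ln (p / q) * tanh (ln (p / q)) \<le> 2 * ((p - q) / q) * (p - q)"
    using ln_le tanh_le p q qp by (intro mult_mono) auto
  also have "\<dots> = 2 * (p - q)\<^sup>2 / q" by (simp add: power2_eq_square)
  also have "\<dots> \<le> 8 / q"
    using q dist qp power_mono[of "p - q" 2 2] by (intro divide_right_mono) auto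
  finally show ?thesis .
qed

lemma ln_div_mult_tanh_ln_div_le:
  fixes p q :: real
  assumes p: "0 < p" and q: "0 < q" and "\<bar>p - q\<bar> \<le> 2" "2 \<le> p + q"
  shows "2 * ln (p / q) * tanh (ln (p / q)) \<le> 8 * (1 / p + 1 / q)"
proof (cases "q \<le> p")
  case True
  then have "2 * ln (p / q) * tanh (ln (p / q)) \<le> 8 / q"
    using assms by (intro ln_div_mult_tanh_ln_div_le_ordered) auto
  then show ?thesis using p by (simp add: add_increasing)
next
  case False
  have "ln (p / q) = - ln (q / p)"
    using p q by (simp add: ln_div)
  moreover have "2 * ln (q / p) * tanh (ln (q / p)) \<le> 8 / p"
    using assms False by (intro ln_div_mult_tanh_ln_div_le_ordered) auto
  ultimately show ?thesis using q by (simp add: add_increasing2)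
qed

lemma neg_mult_F_nl_le:
  assumes "w \<noteq> 1" "w \<noteq> -1"
  shows "- v * F_nl w v \<le> 8 * (1 / cmod (w - 1) + 1 / cmod (w + 1))"
proof -
  define p where "p = cmod (w + 1)"
  define q where "q = cmod (w - 1)"
  have p: "0 < p" using assms(2) by (auto simp: p_def add_eq_0_iff2)
  have q: "0 < q" using assms(1) by (simp add: q_def)
  have "\<bar>p - q\<bar> \<le> 2"
    using norm_triangle_ineq3[of "w + 1" "w - 1"] by (simp add: p_def q_def)
  moreover have "2 \<le> p + q"
    using norm_triangle_ineq4[of "w + 1" "w - 1"] by (simp add: p_def q_def)
  ultimately have bound: "2 * ln (p / q) * tanh (ln (p / q)) \<le> 8 * (1 / q + 1 / p)"
    using ln_div_mult_tanh_ln_div_le[OF p q] by simp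
  have "- v * F_nl w v = - v * tanh ((v - 2 * ln (p / q)) / 2)"
    using p q by (simp add: F_nl_def logistic_eq_tanh flip: p_def q_def)
  also have "\<dots> \<le> 2 * ln (p / q) * tanh (2 * ln (p / q) / 2)"
    by (rule neg_mult_tanh_shift_le)
  finally show ?thesis
    using bound by (simp add: p_def q_def)
qed

section \<open>One-dimensional majorants\<close>

lemma AE_lborel_inner_neq:
  fixes a :: "'a::euclidean_space"
  assumes "a \<noteq> 0"
  shows "AE x in lborel. a \<bullet> x \<noteq> b"
proof -
  have "{x. a \<bullet> x = b} \<in> null_sets lebesgue"
    using negligible_hyperplane[of a b] assms by (simp add: negligible_iff_null_sets)
  then have "AE x in lebesgue. x \<notin> {x. a \<bullet> x = b}"
    by (rule AE_not_in)
  then show ?thesis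
    by (simp add: AE_completion_iff)
qed

lemma AE_lborel_Re_neq: "AE w in lborel. Re w \<noteq> a"
  using AE_lborel_inner_neq[of "1 :: complex" a] by simp

lemma AE_lborel_Im_neq: "AE w in lborel. Im w \<noteq> b"
  using AE_lborel_inner_neq[of "\<i>" b] by simp

lemma nn_integral_complex_Re_Im:
  fixes f g :: "real \<Rightarrow> ennreal"
  assumes [measurable]: "f \<in> borel_measurable borel" "g \<in> borel_measurable borel"
  shows "(\<integral>\<^sup>+w. f (Re w) * g (Im w) \<partial>lborel) = (\<integral>\<^sup>+x. f x \<partial>lborel) * (\<integral>\<^sup>+y. g y \<partial>lborel)"
proof -
  define fg where "fg = (\<lambda>b::complex. if b = 1 then f else g)"
  have "(\<integral>\<^sup>+w. (\<Prod>b\<in>Basis. fg b (w \<bullet> b)) \<partial>lborel) = (\<Prod>b\<in>Basis. \<integral>\<^sup>+x. fg b x \<partial>lborel)"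
    by (rule nn_integral_lborel_prod) (auto simp: fg_def)
  then show ?thesis
    by (simp add: Basis_complex_def fg_def)
qed

text \<open>Phi t = min (|t|^(-1/2)) (|t|^(-3/2)), an integrable majorant of 1 / (|t|^(1/2) (1 + t^2)).\<close>

definition Phi :: "real \<Rightarrow> real" where
  "Phi t = (if \<bar>t\<bar> \<le> 1 then 1 / sqrt \<bar>t\<bar> else 1 / (\<bar>t\<bar> * sqrt \<bar>t\<bar>))"

lemma Phi_nonneg: "0 \<le> Phi t"
  by (simp add: Phi_def)

lemma Phi_minus [simp]: "Phi (- t) = Phi t"
  by (simp add: Phi_def)

lemma Phi_measurable [measurable]: "Phi \<in> borel_measurable borel"
  unfolding Phi_def by measurable

text \<open>Phi on the half-line t >= 0, written with powr so that the integrals are the library's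
  has_integral_powr_from_0 and has_integral_powr_to_inf.\<close>

definition Phi_pos :: "real \<Rightarrow> ennreal" where
  "Phi_pos t = ennreal (t powr (-1/2)) * indicator {0..1} t + ennreal (t powr (-3/2)) * indicator {1..} t"

lemma Phi_pos_measurable [measurable]: "Phi_pos \<in> borel_measurable borel"
  unfolding Phi_pos_def by measurable

lemma nn_integral_Phi_pos: "(\<integral>\<^sup>+t. Phi_pos t \<partial>lborel) = 4"
proof -
  have "(\<integral>\<^sup>+t. ennreal (t powr (-1/2)) * indicator {0..1} t \<partial>lborel) = 2"
    using nn_integral_has_integral_lebesgue'[OF _ has_integral_powr_from_0[of "-1/2" 1]] by simp
  moreover have "(\<integral>\<^sup>+t. ennreal (t powr (-3/2)) * indicator {1..} t \<partial>lborel) = 2"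
    using nn_integral_has_integral_lebesgue'[OF _ has_integral_powr_to_inf[of "-3/2" 1]] by simp
  ultimately show ?thesis
    unfolding Phi_pos_def by (subst nn_integral_add) auto
qed

lemma Phi_le_Phi_pos:
  assumes "0 < t"
  shows "ennreal (Phi t) \<le> Phi_pos t"
proof -
  have half: "t powr (1/2) = sqrt t"
    using assms by (simp add: powr_half_sqrt)
  have "t powr (-1/2) = inverse (t powr (1/2))"
    by (simp flip: powr_minus)
  then have inv_sqrt: "t powr (-1/2) = 1 / sqrt t"
    by (simp add: half inverse_eq_divide)
  have "t powr (-3/2) = inverse (t powr (1 + 1/2))"
    by (simp flip: powr_minus)
  also have "t powr (1 + 1/2) = t powr 1 * t powr (1/2)"
    by (rule powr_add)
  finally have inv_sqrt3: "t powr (-3/2) = 1 / (t * sqrt t)"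
    using assms by (simp add: half inverse_eq_divide)
  show ?thesis
  proof (cases "t \<le> 1")
    case True
    then show ?thesis
      using assms unfolding Phi_def Phi_pos_def inv_sqrt by simp
  next
    case False
    then show ?thesis
      using assms unfolding Phi_def Phi_pos_def inv_sqrt3 by simp
  qed
qed

lemma nn_integral_Phi_le: "(\<integral>\<^sup>+t. ennreal (Phi t) \<partial>lborel) \<le> 8"
proof -
  have "ennreal (Phi t) \<le> Phi_pos t + Phi_pos (- t)" for t
  proof (cases t "0 :: real" rule: linorder_cases)
    case less
    then show ?thesis using Phi_le_Phi_pos[of "- t"] by (simp add: add_increasing)
  next
    case greater
    then show ?thesis using Phi_le_Phi_pos[of t] by (simp add: add_increasing2)
  qed (simp add: Phi_def)
  then have "(\<integral>\<^sup>+t. ennreal (Phi t) \<partial>lborel) \<le> (\<integral>\<^sup>+t. Phi_pos t + Phi_pos (- t) \<partial>lborel)"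
    by (intro nn_integral_mono)
  also have "\<dots> = 4 + 4"
    using nn_integral_real_affine[OF Phi_pos_measurable, of "-1" 0]
    by (subst nn_integral_add) (auto simp: nn_integral_Phi_pos)
  finally show ?thesis by simp
qed

lemma nn_integral_Phi_shift_le: "(\<integral>\<^sup>+x. ennreal (Phi (x - a)) \<partial>lborel) \<le> 8"
  using nn_integral_real_affine[OF _ one_neq_zero, of "\<lambda>t. ennreal (Phi t)" "- a"]
    nn_integral_Phi_le by simp

lemma nn_integral_Phi_scale_le:
  assumes "0 < e"
  shows "(\<integral>\<^sup>+y. ennreal (Phi (e * y)) \<partial>lborel) \<le> ennreal (8 / e)"
proof -
  have "(\<integral>\<^sup>+t. ennreal (Phi t) \<partial>lborel) = ennreal e * (\<integral>\<^sup>+y. ennreal (Phi (e * y)) \<partial>lborel)"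
    using nn_integral_real_affine[of "\<lambda>t. ennreal (Phi t)" e 0] assms by simp
  then have "(\<integral>\<^sup>+y. ennreal (Phi (e * y)) \<partial>lborel) = ennreal (1 / e) * (\<integral>\<^sup>+t. ennreal (Phi t) \<partial>lborel)"
    using assms by (simp add: mult.assoc[symmetric] ennreal_mult[symmetric])
  also have "\<dots> \<le> ennreal (1 / e) * 8"
    by (intro mult_left_mono nn_integral_Phi_le) simp
  also have "\<dots> = ennreal (8 / e)"
    by (metis divide_inverse ennreal_mult' ennreal_numeral inverse_eq_divide mult.commute zero_le_numeral)
  finally show ?thesis .
qed

lemma inv_sqrt_mult_one_plus_sq_le_Phi:
  assumes "t \<noteq> 0"
  shows "1 / (sqrt \<bar>t\<bar> * (1 + t\<^sup>2)) \<le> Phi t"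
proof -
  have pos: "0 < sqrt \<bar>t\<bar>" using assms by simp
  have "\<bar>t\<bar> \<le> 1 + t\<^sup>2"
    using sum_squares_ge_zero[of "\<bar>t\<bar> - 1" 0] by (simp add: power2_eq_square algebra_simps)
  then have "1 / (sqrt \<bar>t\<bar> * (1 + t\<^sup>2)) \<le> 1 / (\<bar>t\<bar> * sqrt \<bar>t\<bar>)"
    using pos assms by (intro divide_left_mono) (auto simp: mult.commute)
  moreover have "1 / (sqrt \<bar>t\<bar> * (1 + t\<^sup>2)) \<le> 1 / sqrt \<bar>t\<bar>"
    using pos by (intro divide_left_mono) (auto simp: add_pos_nonneg)
  ultimately show ?thesis
    by (simp add: Phi_def)
qed

lemma inv_sqrt_le_Phi:
  assumes "t \<noteq> 0" "\<bar>t\<bar> \<le> 2"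
  shows "1 / sqrt \<bar>t\<bar> \<le> 2 * Phi t"
proof (cases "\<bar>t\<bar> \<le> 1")
  case True
  then show ?thesis by (simp add: Phi_def divide_right_mono)
next
  case False
  have "1 / sqrt \<bar>t\<bar> = \<bar>t\<bar> / (\<bar>t\<bar> * sqrt \<bar>t\<bar>)"
    using assms by simp
  also have "\<dots> \<le> 2 / (\<bar>t\<bar> * sqrt \<bar>t\<bar>)"
    using assms by (intro divide_right_mono) auto
  finally show ?thesis
    using False by (simp add: Phi_def)
qed

definition sqrt_kernel :: "real \<Rightarrow> real \<Rightarrow> real \<Rightarrow> real" where
  "sqrt_kernel a e x = 1 / (sqrt \<bar>x - a\<bar> * (1 + e\<^sup>2 * x\<^sup>2))"

lemma sqrt_kernel_nonneg: "0 \<le> sqrt_kernel a e x"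
  by (simp add: sqrt_kernel_def)

lemma sqrt_kernel_measurable [measurable]: "sqrt_kernel a e \<in> borel_measurable borel"
  unfolding sqrt_kernel_def by measurable

lemma sqrt_kernel_0_le_Phi:
  assumes "0 < e" "x \<noteq> 0"
  shows "sqrt_kernel 0 e x \<le> sqrt e * Phi (e * x)"
proof -
  have "sqrt_kernel 0 e x = sqrt e * (1 / (sqrt \<bar>e * x\<bar> * (1 + (e * x)\<^sup>2)))"
    using assms by (simp add: sqrt_kernel_def abs_mult real_sqrt_mult power_mult_distrib)
  also have "\<dots> \<le> sqrt e * Phi (e * x)"
    using assms by (intro mult_left_mono inv_sqrt_mult_one_plus_sq_le_Phi) auto
  finally show ?thesis .
qed

lemma sqrt_kernel_le_Phi:
  assumes e: "0 < e" and x: "x \<noteq> 0" "x \<noteq> a" and a: "\<bar>a\<bar> \<le> 1"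
  shows "sqrt_kernel a e x \<le> 2 * Phi (x - a) + sqrt 2 * sqrt e * Phi (e * x)"
proof (cases "\<bar>x - a\<bar> \<le> 2")
  case True
  have "sqrt_kernel a e x \<le> 1 / sqrt \<bar>x - a\<bar>"
    using x by (simp add: sqrt_kernel_def divide_left_mono add_pos_nonneg)
  also have "\<dots> \<le> 2 * Phi (x - a)"
    using True x by (intro inv_sqrt_le_Phi) auto
  moreover have "0 \<le> sqrt 2 * sqrt e * Phi (e * x)"
    using e Phi_nonneg[of "e * x"] by simp
  ultimately show ?thesis by linarith
next
  case False
  have "\<bar>x\<bar> \<le> 2 * \<bar>x - a\<bar>"
    using False a abs_triangle_ineq[of "x - a" a] by simp
  then have "sqrt \<bar>x\<bar> \<le> sqrt 2 * sqrt \<bar>x - a\<bar>"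
    by (simp flip: real_sqrt_mult)
  then have "sqrt_kernel a e x \<le> sqrt 2 * sqrt_kernel 0 e x"
    using x by (simp add: sqrt_kernel_def divide_simps add_pos_nonneg mult_right_mono)
  also have "\<dots> \<le> sqrt 2 * (sqrt e * Phi (e * x))"
    using sqrt_kernel_0_le_Phi[OF e x(1)] by (intro mult_left_mono) auto
  finally show ?thesis
    using Phi_nonneg[of "x - a"] by (simp add: add_increasing mult.assoc)
qed

lemma nn_integral_sqrt_kernel_0_le:
  assumes "0 < e"
  shows "(\<integral>\<^sup>+y. ennreal (sqrt_kernel 0 e y) \<partial>lborel) \<le> ennreal (8 / sqrt e)"
proof -
  have "(\<integral>\<^sup>+y. ennreal (sqrt_kernel 0 e y) \<partial>lborel) \<le> (\<integral>\<^sup>+y. ennreal (sqrt e) * ennreal (Phi (e * y)) \<partial>lborel)"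
    using AE_lborel_singleton[of 0]
  proof (rule nn_integral_mono_AE[OF AE_mp], intro AE_I2 impI)
    fix y :: real assume "y \<noteq> 0"
    then have "ennreal (sqrt_kernel 0 e y) \<le> ennreal (sqrt e * Phi (e * y))"
      by (intro ennreal_leI sqrt_kernel_0_le_Phi assms)
    then show "ennreal (sqrt_kernel 0 e y) \<le> ennreal (sqrt e) * ennreal (Phi (e * y))"
      using assms Phi_nonneg by (simp add: ennreal_mult)
  qed
  also have "\<dots> = ennreal (sqrt e) * (\<integral>\<^sup>+y. ennreal (Phi (e * y)) \<partial>lborel)"
    by (rule nn_integral_cmult) measurable
  also have "\<dots> \<le> ennreal (sqrt e) * ennreal (8 / e)"
    using nn_integral_Phi_scale_le[OF assms] by (rule mult_left_mono) simp
  also have "\<dots> = ennreal (8 / sqrt e)"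
  proof -
    have "sqrt e * (8 / e) = 8 / sqrt e"
      using assms by (simp add: field_simps)
    then show ?thesis
      using assms by (simp flip: ennreal_mult)
  qed
  finally show ?thesis .
qed

lemma nn_integral_sqrt_kernel_le:
  assumes e: "0 < e" "e \<le> 1" and a: "\<bar>a\<bar> \<le> 1"
  shows "(\<integral>\<^sup>+x. ennreal (sqrt_kernel a e x) \<partial>lborel) \<le> ennreal (28 / sqrt e)"
proof -
  define c where "c = sqrt 2 * sqrt e"
  have c: "0 \<le> c" using e by (simp add: c_def)
  have "(\<integral>\<^sup>+x. ennreal (sqrt_kernel a e x) \<partial>lborel)
      \<le> (\<integral>\<^sup>+x. 2 * ennreal (Phi (x - a)) + ennreal c * ennreal (Phi (e * x)) \<partial>lborel)"
    using AE_lborel_singleton[of 0] AE_lborel_singleton[of a]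
  proof (rule nn_integral_mono_AE[OF AE_mp[OF AE_conjI]], intro AE_I2 impI, elim conjE)
    fix x :: real assume "x \<noteq> 0" "x \<noteq> a"
    then have "ennreal (sqrt_kernel a e x) \<le> ennreal (2 * Phi (x - a) + c * Phi (e * x))"
      unfolding c_def by (intro ennreal_leI sqrt_kernel_le_Phi e a)
    then show "ennreal (sqrt_kernel a e x) \<le> 2 * ennreal (Phi (x - a)) + ennreal c * ennreal (Phi (e * x))"
      using c Phi_nonneg by (simp add: ennreal_plus ennreal_mult)
  qed
  also have "\<dots> = 2 * (\<integral>\<^sup>+x. ennreal (Phi (x - a)) \<partial>lborel) + ennreal c * (\<integral>\<^sup>+x. ennreal (Phi (e * x)) \<partial>lborel)"
    by (subst nn_integral_add) (auto simp: nn_integral_cmult)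
  also have "\<dots> \<le> 2 * 8 + ennreal c * ennreal (8 / e)"
    using nn_integral_Phi_shift_le[of a] nn_integral_Phi_scale_le[OF e(1)]
    by (intro add_mono mult_left_mono) auto
  also have "\<dots> = ennreal (16 + c * (8 / e))"
    using c e by (simp add: ennreal_plus flip: ennreal_mult)
  also have "\<dots> \<le> ennreal (28 / sqrt e)"
  proof (rule ennreal_leI)
    have s: "0 < sqrt e" "sqrt e \<le> 1" using e by auto
    have "sqrt 2 \<le> 3 / 2"
      by (rule real_le_lsqrt) (auto simp: power2_eq_square)
    have "c * (8 / e) = sqrt 2 * 8 / sqrt e"
      using e by (simp add: c_def field_simps)
    also have "\<dots> \<le> 12 / sqrt e"
      using s \<open>sqrt 2 \<le> 3 / 2\<close> by (intro divide_right_mono) auto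
    moreover have "16 \<le> 16 / sqrt e"
      using s by (simp add: le_divide_eq)
    ultimately have "16 + c * (8 / e) \<le> 16 / sqrt e + 12 / sqrt e"
      by linarith
    then show "16 + c * (8 / e) \<le> 28 / sqrt e"
      by (simp flip: add_divide_distrib)
  qed
  finally show ?thesis .
qed

section \<open>The weighted plane integral\<close>

definition eps_weight :: "real \<Rightarrow> complex \<Rightarrow> real" where
  "eps_weight e w = 4 / (1 + e\<^sup>2 * (cmod w)\<^sup>2)\<^sup>2"

lemma eps_weight_nonneg: "0 \<le> eps_weight e w"
  by (simp add: eps_weight_def)

lemma eps_weight_div_dist_le:
  assumes "Re w \<noteq> a" "Im w \<noteq> 0"
  shows "eps_weight e w / cmod (w - of_real a) \<le> 4 * (sqrt_kernel a e (Re w) * sqrt_kernel 0 e (Im w))"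
proof -
  define x where "x = Re w"
  define y where "y = Im w"
  have "(1 + u) * (1 + v) \<le> (1 + (u + v))\<^sup>2" if "0 \<le> u" "0 \<le> v" for u v :: real
  proof -
    have "(1 + (u + v))\<^sup>2 = (1 + u) * (1 + v) + (u + v + u * u + u * v + v * v)"
      by (simp add: power2_eq_square algebra_simps)
    moreover have "0 \<le> u + v + u * u + u * v + v * v"
      using that by simp
    ultimately show ?thesis by linarith
  qed
  then have weights: "(1 + e\<^sup>2 * x\<^sup>2) * (1 + e\<^sup>2 * y\<^sup>2) \<le> (1 + e\<^sup>2 * (x\<^sup>2 + y\<^sup>2))\<^sup>2"
    by (simp add: distrib_left)
  have dist: "sqrt \<bar>x - a\<bar> * sqrt \<bar>y\<bar> \<le> sqrt ((x - a)\<^sup>2 + y\<^sup>2)"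
  proof -
    have "(\<bar>x - a\<bar> - \<bar>y\<bar>)\<^sup>2 = (x - a)\<^sup>2 + y\<^sup>2 - 2 * (\<bar>x - a\<bar> * \<bar>y\<bar>)"
      by (simp add: power2_diff)
    moreover have "0 \<le> \<bar>x - a\<bar> * \<bar>y\<bar>"
      by simp
    ultimately have "\<bar>x - a\<bar> * \<bar>y\<bar> \<le> (x - a)\<^sup>2 + y\<^sup>2"
      using zero_le_power2[of "\<bar>x - a\<bar> - \<bar>y\<bar>"] by linarith
    then show ?thesis by (simp flip: real_sqrt_mult)
  qed
  have "0 < (1 + e\<^sup>2 * x\<^sup>2) * (1 + e\<^sup>2 * y\<^sup>2) * (sqrt \<bar>x - a\<bar> * sqrt \<bar>y\<bar>)"
    using assms by (simp add: x_def y_def add_pos_nonneg)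
  then have "4 / ((1 + e\<^sup>2 * (x\<^sup>2 + y\<^sup>2))\<^sup>2 * sqrt ((x - a)\<^sup>2 + y\<^sup>2))
      \<le> 4 / ((1 + e\<^sup>2 * x\<^sup>2) * (1 + e\<^sup>2 * y\<^sup>2) * (sqrt \<bar>x - a\<bar> * sqrt \<bar>y\<bar>))"
    using weights dist by (intro frac_le mult_mono) auto
  moreover have "cmod (w - of_real a) = sqrt ((x - a)\<^sup>2 + y\<^sup>2)" "(cmod w)\<^sup>2 = x\<^sup>2 + y\<^sup>2"
    by (simp_all add: cmod_def x_def y_def)
  ultimately show ?thesis
    by (simp add: eps_weight_def sqrt_kernel_def x_def y_def mult_ac)
qed

lemma nn_integral_eps_weight_div_dist_le:
  assumes e: "0 < e" "e \<le> 1" and a: "\<bar>a\<bar> \<le> 1"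
  shows "(\<integral>\<^sup>+w. ennreal (eps_weight e w / cmod (w - of_real a)) \<partial>lborel) \<le> ennreal (896 / e)"
proof -
  have "(\<integral>\<^sup>+w. ennreal (eps_weight e w / cmod (w - of_real a)) \<partial>lborel)
      \<le> (\<integral>\<^sup>+w. 4 * (ennreal (sqrt_kernel a e (Re w)) * ennreal (sqrt_kernel 0 e (Im w))) \<partial>lborel)"
    using AE_lborel_Re_neq[of a] AE_lborel_Im_neq[of 0]
  proof (rule nn_integral_mono_AE[OF AE_mp[OF AE_conjI]], intro AE_I2 impI, elim conjE)
    fix w :: complex assume "Re w \<noteq> a" "Im w \<noteq> 0"
    then have "ennreal (eps_weight e w / cmod (w - of_real a))
        \<le> ennreal (4 * (sqrt_kernel a e (Re w) * sqrt_kernel 0 e (Im w)))"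
      by (intro ennreal_leI eps_weight_div_dist_le) auto
    then show "ennreal (eps_weight e w / cmod (w - of_real a))
        \<le> 4 * (ennreal (sqrt_kernel a e (Re w)) * ennreal (sqrt_kernel 0 e (Im w)))"
      by (simp add: ennreal_mult sqrt_kernel_nonneg)
  qed
  also have "\<dots> = 4 * ((\<integral>\<^sup>+x. ennreal (sqrt_kernel a e x) \<partial>lborel) * (\<integral>\<^sup>+y. ennreal (sqrt_kernel 0 e y) \<partial>lborel))"
    using nn_integral_complex_Re_Im[of "\<lambda>x. ennreal (sqrt_kernel a e x)" "\<lambda>y. ennreal (sqrt_kernel 0 e y)"]
    by (simp add: nn_integral_cmult)
  also have "\<dots> \<le> 4 * (ennreal (28 / sqrt e) * ennreal (8 / sqrt e))"
    using nn_integral_sqrt_kernel_le[OF e a] nn_integral_sqrt_kernel_0_le[OF e(1)]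
    by (intro mult_left_mono mult_mono) auto
  also have "\<dots> = ennreal (896 / e)"
  proof -
    have "ennreal (28 / sqrt e) * ennreal (8 / sqrt e) = ennreal (224 / e)"
      using e by (simp flip: ennreal_mult)
    then show ?thesis
      using e ennreal_mult[of 4 "224 / e"] by simp
  qed
  finally show ?thesis .
qed

section \<open>The Dirichlet energy\<close>

lemma dirichlet_density_eq:
  assumes "hat_h_eq R e h"
  shows "h w * (- lap_S2 h w) * (4 / (1 + (cmod w)\<^sup>2)\<^sup>2)
    = 2 * R\<^sup>2 * e\<^sup>2 * eps_weight e w * (- h w * F_nl w (h w))"
proof -
  define A where "A = 4 / (1 + (cmod w)\<^sup>2)\<^sup>2"
  have lap: "lap_S2 h w = 2 * R\<^sup>2 * e\<^sup>2 * (f_eps e w)\<^sup>2 * F_nl w (h w)"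
    using assms unfolding hat_h_eq_def by (metis add.commute add_eq_0_iff)
  have "0 < 1 + (cmod w)\<^sup>2" "0 < 1 + e\<^sup>2 * (cmod w)\<^sup>2"
    by (simp_all add: add_pos_nonneg)
  then have weight: "(f_eps e w)\<^sup>2 * A = eps_weight e w"
    by (simp add: A_def f_eps_def eps_weight_def power_divide)
  have "h w * (- lap_S2 h w) * A = 2 * R\<^sup>2 * e\<^sup>2 * ((f_eps e w)\<^sup>2 * A) * (- h w * F_nl w (h w))"
    unfolding lap by (simp add: algebra_simps)
  then show ?thesis
    unfolding weight by (simp only: A_def)
qed

lemma dirichlet_density_le:
  assumes "hat_h_eq R e h" "w \<noteq> 1" "w \<noteq> -1"
  shows "h w * (- lap_S2 h w) * (4 / (1 + (cmod w)\<^sup>2)\<^sup>2)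
    \<le> 16 * R\<^sup>2 * e\<^sup>2 * (eps_weight e w / cmod (w - 1) + eps_weight e w / cmod (w + 1))"
proof -
  have "2 * R\<^sup>2 * e\<^sup>2 * eps_weight e w * (- h w * F_nl w (h w))
      \<le> 2 * R\<^sup>2 * e\<^sup>2 * eps_weight e w * (8 * (1 / cmod (w - 1) + 1 / cmod (w + 1)))"
    using neg_mult_F_nl_le[OF assms(2,3)] eps_weight_nonneg by (intro mult_left_mono) auto
  then show ?thesis
    unfolding dirichlet_density_eq[OF assms(1)] by (simp add: algebra_simps)
qed

lemma dirichlet_S2_le:
  assumes h: "hat_h_eq R e h" and e: "0 < e" "e \<le> 1"
  shows "dirichlet_S2 h \<le> 28672 * R\<^sup>2 * e"
proof -
  define K where "K = 16 * R\<^sup>2 * e\<^sup>2"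
  have K_nonneg: "0 \<le> K" by (simp add: K_def)
  define W where "W = (\<lambda>a w. ennreal (eps_weight e w / cmod (w - of_real a)))"
  have W_measurable [measurable]: "W a \<in> borel_measurable lborel" for a
    unfolding W_def eps_weight_def by measurable
  have "(\<integral>\<^sup>+w. ennreal (h w * (- lap_S2 h w) * (4 / (1 + (cmod w)\<^sup>2)\<^sup>2)) \<partial>lborel)
      \<le> (\<integral>\<^sup>+w. ennreal K * (W 1 w + W (-1) w) \<partial>lborel)"
    using AE_lborel_Im_neq[of 0]
  proof (rule nn_integral_mono_AE[OF AE_mp], intro AE_I2 impI)
    fix w :: complex assume "Im w \<noteq> 0"
    then have "w \<noteq> 1" "w \<noteq> -1" by auto
    then have "ennreal (h w * (- lap_S2 h w) * (4 / (1 + (cmod w)\<^sup>2)\<^sup>2))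
        \<le> ennreal (K * (eps_weight e w / cmod (w - 1) + eps_weight e w / cmod (w + 1)))"
      unfolding K_def by (intro ennreal_leI dirichlet_density_le h)
    then show "ennreal (h w * (- lap_S2 h w) * (4 / (1 + (cmod w)\<^sup>2)\<^sup>2)) \<le> ennreal K * (W 1 w + W (-1) w)"
      by (simp add: W_def K_def eps_weight_nonneg ennreal_mult ennreal_plus)
  qed
  also have "\<dots> = ennreal K * ((\<integral>\<^sup>+w. W 1 w \<partial>lborel) + (\<integral>\<^sup>+w. W (-1) w \<partial>lborel))"
    by (simp add: nn_integral_cmult nn_integral_add)
  also have "\<dots> \<le> ennreal K * (ennreal (896 / e) + ennreal (896 / e))"
    using nn_integral_eps_weight_div_dist_le[OF e, of 1] nn_integral_eps_weight_div_dist_le[OF e, of "-1"]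
    unfolding W_def
    by (intro mult_left_mono add_mono) auto
  also have "\<dots> = ennreal K * ennreal (1792 / e)"
    using e by (simp flip: ennreal_plus)
  also have "\<dots> = ennreal (K * (1792 / e))"
    using e K_nonneg by (intro ennreal_mult[symmetric]) auto
  also have "K * (1792 / e) = 28672 * R\<^sup>2 * e"
    using e by (simp add: K_def power2_eq_square)
  \<comment> \<open>this bounds the positive part, so it also covers a non-integrable integrand (integral 0)\<close>
  finally show ?thesis
    unfolding dirichlet_S2_def using e by (intro integral_real_bounded) auto
qed

theorem mainTheorem10:
  fixes R :: real
  assumes "R > 0"
  shows "\<exists>C>0. \<forall>\<epsilon> h. 0 < \<epsilon> \<and> \<epsilon> \<le> 1 \<and> smooth_S2 h \<and> hat_h_eq R \<epsilon> h
            \<longrightarrow> dirichlet_S2 h \<le> C * \<epsilon>"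
  using assms dirichlet_S2_le by (intro exI[of _ "28672 * R\<^sup>2"]) auto

end
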